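(* Let $\mathcal{K}$ be a Hilbert space, let $A$ be a closable, densely defined operator in $\mathcal{K}$, let $A_0$ be an operator with $A_0\subseteq A^*$, and let $(T_n)_{n=0}^\infty\subseteq\mathbf{B}(\mathcal{K})$ be a sequence converging to $I_\mathcal{K}$ in the weak operator topology such that for every $n$: (f1) the commutator $\mathrm{ad}(T_n,\bar A)=T_n\bar A-\bar AT_n$ is densely defined and bounded in $\mathcal{K}$; and (f2) $T_n^*\mathcal{D}(A^* )\subseteq\mathcal{D}(\bar A_0)$. If $$\sup_{n\in\mathbb{N}}\|\mathrm{ad}(T_n,\bar A)\|<+\infty,$$ then $\bar A_0=A^*$.
   Context: $\mathbf{B}(\mathcal{K})$ denotes the space of all bounded linear operators defined on all of $\mathcal{K}$. For operators $S,T$, $\mathrm{ad}(S,T):=ST-TS$, with sums and products of unbounded operators taken on their natural domains. $\bar S$ denotes the closure of a closable operator $S$; $\mathcal{D}(S)$ its domain. An operator $S$ is called bounded if $\|Sf\|\le c\|f\|$ for all $f\in\mathcal{D}(S)$ and some $c\ge0$, and $\|S\|$ is the supremum of $\|Sf\|$ over $f\in\mathcal{D}(S)$, $\|f\|\le1$. *)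

theory Defs
  imports "HOL-Analysis.Analysis"
begin

text \<open>Linear operators in a Hilbert space are represented by their graphs,
  i.e. subsets of 'a \<times> 'a.  Inclusion of operators is inclusion of graphs.\<close>

type_synonym 'a linop = "('a \<times> 'a) set"

definition op_dom :: "'a linop \<Rightarrow> 'a set" where
  "op_dom S = {x. \<exists>y. (x, y) \<in> S}"

definition is_op :: "('a::real_vector) linop \<Rightarrow> bool" where
  "is_op S \<longleftrightarrow> subspace S \<and> (\<forall>y. (0, y) \<in> S \<longrightarrow> y = 0)"

definition densely_defined :: "('a::real_normed_vector) linop \<Rightarrow> bool" where
  "densely_defined S \<longleftrightarrow> closure (op_dom S) = UNIV"

definition op_closure :: "('a::real_normed_vector) linop \<Rightarrow> 'a linop" where
  "op_closure S = closure S"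

definition closable :: "('a::real_normed_vector) linop \<Rightarrow> bool" where
  "closable S \<longleftrightarrow> is_op (closure S)"

definition op_adjoint :: "('a::real_inner) linop \<Rightarrow> 'a linop" where
  "op_adjoint S = {(y, z). \<forall>(x, w) \<in> S. inner w y = inner x z}"

definition graph_of :: "('a \<Rightarrow> 'a) \<Rightarrow> 'a linop" where
  "graph_of f = {(x, f x) | x. True}"

text \<open>op_comp S R = S R (first R, then S), on its natural domain.\<close>
definition op_comp :: "'a linop \<Rightarrow> 'a linop \<Rightarrow> 'a linop" where
  "op_comp S R = {(x, z). \<exists>y. (x, y) \<in> R \<and> (y, z) \<in> S}"

definition op_diff :: "('a::ab_group_add) linop \<Rightarrow> 'a linop \<Rightarrow> 'a linop" where
  "op_diff S R = {(x, u - v) | x u v. (x, u) \<in> S \<and> (x, v) \<in> R}"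

definition ad :: "('a::ab_group_add) linop \<Rightarrow> 'a linop \<Rightarrow> 'a linop" where
  "ad S T = op_diff (op_comp S T) (op_comp T S)"

definition op_bounded :: "('a::real_normed_vector) linop \<Rightarrow> bool" where
  "op_bounded S \<longleftrightarrow> (\<exists>c\<ge>0. \<forall>(x, y) \<in> S. norm y \<le> c * norm x)"

definition op_norm :: "('a::real_normed_vector) linop \<Rightarrow> real" where
  "op_norm S = Sup {norm y | x y. (x, y) \<in> S \<and> norm x \<le> 1}"

definition wot_tendsto_id :: "(nat \<Rightarrow> 'a \<Rightarrow> 'a::real_inner) \<Rightarrow> bool" where
  "wot_tendsto_id T \<longleftrightarrow> (\<forall>x y. (\<lambda>n. inner (T n x) y) \<longlonglongrightarrow> inner x y)"

end

theory Submission
  imports Defs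
begin

text \<open>Fix \<open>(y, a) \<in> A\<^sup>*\<close>. By (f2) the vectors \<open>T\<^sub>n\<^sup>* y\<close> lie in the domain of \<open>\<bar>A\<^sub>0\<close>,
  so there are \<open>w\<^sub>n\<close> with \<open>(T\<^sub>n\<^sup>* y, w\<^sub>n) \<in> \<bar>A\<^sub>0\<close>. The defect \<open>z\<^sub>n = w\<^sub>n - T\<^sub>n\<^sup>* a\<close> satisfies
  \<open>\<langle>x, z\<^sub>n\<rangle> = \<langle>ad(T\<^sub>n, \<bar>A) x, y\<rangle>\<close>, so by (f1) and the uniform bound on the commutators the
  \<open>z\<^sub>n\<close> are uniformly bounded, and they tend weakly to \<open>0\<close> on the dense set \<open>\<D>(\<bar>A)\<close>,
  hence everywhere. Therefore \<open>(T\<^sub>n\<^sup>* y, w\<^sub>n) \<rightarrow> (y, a)\<close> weakly, and since the closed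
  subspace \<open>\<bar>A\<^sub>0\<close> of \<open>\<K> \<times> \<K>\<close> is weakly closed, \<open>(y, a) \<in> \<bar>A\<^sub>0\<close>. The converse inclusion
  holds because adjoints are closed.\<close>

lemma subspace_closure:
  fixes S :: "'b::real_normed_vector set"
  assumes "subspace S"
  shows "subspace (closure S)"
  unfolding subspace_def
proof (intro conjI ballI allI)
  show "0 \<in> closure S"
    using assms closure_subset subspace_0 by blast
next
  fix x y assume "x \<in> closure S" "y \<in> closure S"
  then obtain f g where f: "\<forall>n. f n \<in> S" "f \<longlonglongrightarrow> x" and g: "\<forall>n. g n \<in> S" "g \<longlonglongrightarrow> y"
    by (meson closure_sequential)
  have "(\<lambda>n. f n + g n) \<longlonglongrightarrow> x + y"
    by (intro tendsto_intros f g)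
  moreover have "\<forall>n. f n + g n \<in> S"
    using f g assms subspace_add by blast
  ultimately show "x + y \<in> closure S"
    by (meson closure_sequential)
next
  fix c :: real and x assume "x \<in> closure S"
  then obtain f where f: "\<forall>n. f n \<in> S" "f \<longlonglongrightarrow> x"
    by (meson closure_sequential)
  have "(\<lambda>n. c *\<^sub>R f n) \<longlonglongrightarrow> c *\<^sub>R x"
    by (intro tendsto_intros f)
  moreover have "\<forall>n. c *\<^sub>R f n \<in> S"
    using f assms subspace_scale by blast
  ultimately show "c *\<^sub>R x \<in> closure S"
    by (meson closure_sequential)
qed

lemma Cauchy_if_dist_squared_le:
  fixes s :: "nat \<Rightarrow> 'b::metric_space"
  assumes "\<And>m n. (dist (s m) (s n))\<^sup>2 \<le> e m + e n" and "e \<longlonglongrightarrow> 0"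
  shows "Cauchy s"
proof (rule metric_CauchyI)
  fix \<epsilon> :: real assume "0 < \<epsilon>"
  then obtain M where M: "\<And>n. n \<ge> M \<Longrightarrow> \<bar>e n\<bar> < \<epsilon>\<^sup>2 / 2"
    using LIMSEQ_D[OF assms(2), of "\<epsilon>\<^sup>2 / 2"] by auto
  have "dist (s m) (s n) < \<epsilon>" if "m \<ge> M" "n \<ge> M" for m n
  proof -
    have "(dist (s m) (s n))\<^sup>2 < \<epsilon>\<^sup>2"
      using assms(1)[of m n] M[OF that(1)] M[OF that(2)] by linarith
    then show ?thesis
      using \<open>0 < \<epsilon>\<close> by (simp add: power_less_imp_less_base)
  qed
  then show "\<exists>M. \<forall>m\<ge>M. \<forall>n\<ge>M. dist (s m) (s n) < \<epsilon>"
    by blast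
qed

lemma parallelogram_law_midpoint:
  fixes p s t :: "'b::real_inner"
  shows "(norm (s - t))\<^sup>2
    = 2 * (norm (p - s))\<^sup>2 + 2 * (norm (p - t))\<^sup>2 - 4 * (norm (p - (1/2) *\<^sub>R (s + t)))\<^sup>2"
  unfolding power2_norm_eq_inner
  by (simp add: inner_diff_left inner_diff_right inner_add_left inner_add_right
      inner_commute algebra_simps)

lemma nearest_point_exists_convex:
  fixes S :: "'b::{real_inner,complete_space} set"
  assumes "convex S" "closed S" "S \<noteq> {}"
  shows "\<exists>q\<in>S. \<forall>g\<in>S. norm (p - q) \<le> norm (p - g)"
proof -
  define d where "d = Inf {(norm (p - s))\<^sup>2 | s. s \<in> S}"
  have bdd: "bdd_below {(norm (p - s))\<^sup>2 | s. s \<in> S}"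
    by (rule bdd_belowI[of _ 0]) auto
  have d_le: "d \<le> (norm (p - s))\<^sup>2" if "s \<in> S" for s
    unfolding d_def by (rule cInf_lower[OF _ bdd]) (use that in auto)
  have "\<exists>s\<in>S. (norm (p - s))\<^sup>2 < d + 1 / Suc n" for n
    using cInf_lessD[of "{(norm (p - s))\<^sup>2 | s. s \<in> S}" "d + 1 / Suc n"] assms(3)
    unfolding d_def by fastforce
  then obtain s where s: "\<And>n. s n \<in> S" "\<And>n. (norm (p - s n))\<^sup>2 < d + 1 / Suc n"
    by metis
  have "(dist (s m) (s n))\<^sup>2 \<le> 2 / Suc m + 2 / Suc n" for m n
  proof -
    have "(1/2) *\<^sub>R (s m + s n) \<in> S"
      using convexD[OF assms(1) s(1)[of m] s(1)[of n], of "1/2" "1/2"] by (simp add: scaleR_add_right)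
    then have "d \<le> (norm (p - (1/2) *\<^sub>R (s m + s n)))\<^sup>2"
      by (rule d_le)
    then show ?thesis
      using s(2)[of m] s(2)[of n] parallelogram_law_midpoint[of "s m" "s n" p]
      unfolding dist_norm by linarith
  qed
  moreover have "(\<lambda>n. 2 / real (Suc n)) \<longlonglongrightarrow> 0"
    using LIMSEQ_inverse_real_of_nat[THEN tendsto_mult_left, of 2]
    by (simp add: inverse_eq_divide)
  ultimately have "Cauchy s"
    by (rule Cauchy_if_dist_squared_le)
  then obtain q where q: "s \<longlonglongrightarrow> q"
    using Cauchy_convergent_iff convergent_def by blast
  have "q \<in> S"
    using closed_sequentially[OF assms(2)] s(1) q by blast
  moreover have "(norm (p - q))\<^sup>2 \<le> d"
  proof (rule LIMSEQ_le)
    show "(\<lambda>n. (norm (p - s n))\<^sup>2) \<longlonglongrightarrow> (norm (p - q))\<^sup>2"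
      by (intro tendsto_intros q)
    show "(\<lambda>n. d + 1 / Suc n) \<longlonglongrightarrow> d"
      using LIMSEQ_inverse_real_of_nat[THEN tendsto_add_const_iff[of d, THEN iffD2]]
      by (simp add: inverse_eq_divide)
  qed (use s(2) less_imp_le in auto)
  ultimately show ?thesis
    using d_le by (meson order_trans power2_le_imp_le norm_ge_zero)
qed

lemma nearest_point_orthogonal_subspace:
  fixes S :: "'b::real_inner set"
  assumes "subspace S" "q \<in> S" "\<And>g. g \<in> S \<Longrightarrow> norm (p - q) \<le> norm (p - g)" "g \<in> S"
  shows "inner (p - q) g = 0"
proof (cases "g = 0")
  case False
  define c where "c = inner (p - q) g"
  define t where "t = c / inner g g"
  have gg: "inner g g > 0"
    using False by simp
  have "q + t *\<^sub>R g \<in> S"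
    using assms(1,2,4) subspace_add subspace_scale by blast
  then have "(norm (p - q))\<^sup>2 \<le> (norm (p - q - t *\<^sub>R g))\<^sup>2"
    using assms(3) by (simp add: diff_diff_eq)
  then have "0 \<le> t * t * inner g g - 2 * t * c"
    unfolding c_def power2_norm_eq_inner
    by (simp add: inner_diff_left inner_diff_right inner_commute algebra_simps)
  then have "c * c \<le> 0"
    using gg unfolding t_def by (simp add: field_simps)
  then show ?thesis
    unfolding c_def[symmetric] by (auto simp: mult_le_0_iff)
qed simp

lemma orthogonal_projection_exists:
  fixes S :: "'b::{real_inner,complete_space} set"
  assumes "subspace S" "closed S"
  shows "\<exists>q\<in>S. \<forall>g\<in>S. inner (p - q) g = 0"
  using nearest_point_exists_convex[OF subspace_imp_convex[OF assms(1)] assms(2)]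
    nearest_point_orthogonal_subspace[OF assms(1)] subspace_0[OF assms(1)]
  by blast

lemma Riesz_representation:
  fixes f :: "'b::{real_inner,complete_space} \<Rightarrow> real"
  assumes "bounded_linear f"
  shows "\<exists>z. \<forall>x. f x = inner x z"
proof (cases "\<forall>x. f x = 0")
  case False
  then obtain e where e: "f e \<noteq> 0"
    by blast
  interpret f: bounded_linear f
    by (rule assms)
  define K where "K = {x. f x = 0}"
  have "subspace K"
    unfolding K_def subspace_def by (auto simp: f.add f.scale)
  moreover have "closed K"
    unfolding K_def by (intro closed_Collect_eq continuous_intros f.continuous_on continuous_on_id)
  ultimately obtain q where q: "q \<in> K" "\<forall>g\<in>K. inner (e - q) g = 0"
    using orthogonal_projection_exists by blast
  define u where "u = e - q"
  have fu: "f u \<noteq> 0"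
    using e q(1) unfolding u_def K_def by (simp add: f.diff)
  then have uu: "inner u u > 0"
    by auto
  have "f x = inner x ((f u / inner u u) *\<^sub>R u)" for x
  proof -
    have "x - (f x / f u) *\<^sub>R u \<in> K"
      unfolding K_def using fu by (simp add: f.diff f.scale)
    then have "inner u (x - (f x / f u) *\<^sub>R u) = 0"
      using q(2) unfolding u_def by blast
    then have "inner u x = (f x / f u) * inner u u"
      by (simp add: inner_diff_right)
    then show ?thesis
      using fu uu by (simp add: inner_commute field_simps)
  qed
  then show ?thesis
    by blast
qed (rule exI[of _ 0], simp)

lemma bounded_linear_has_adjoint:
  fixes T :: "'b::{real_inner,complete_space} \<Rightarrow> 'b"
  assumes "bounded_linear T"
  shows "\<exists>S. \<forall>x y. inner (T x) y = inner x (S y)"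
proof -
  have "\<forall>y. \<exists>z. \<forall>x. inner (T x) y = inner x z"
    using Riesz_representation bounded_linear_compose[OF bounded_linear_inner_left assms] by blast
  then show ?thesis
    by metis
qed

lemma mem_closed_subspace_if_weak_limit:
  fixes K :: "'b::{real_inner,complete_space} set"
  assumes "subspace K" "closed K" "\<And>n. f n \<in> K"
    and "\<And>u. (\<lambda>n. inner u (f n)) \<longlonglongrightarrow> inner u p"
  shows "p \<in> K"
proof -
  obtain q where q: "q \<in> K" "\<forall>g\<in>K. inner (p - q) g = 0"
    using orthogonal_projection_exists assms(1,2) by blast
  have "(\<lambda>n. inner (p - q) (f n)) \<longlonglongrightarrow> inner (p - q) p"
    by (rule assms(4))
  then have "(\<lambda>n. 0) \<longlonglongrightarrow> inner (p - q) p"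
    using q(2) assms(3) by simp
  then have "inner (p - q) p = 0"
    by (simp add: LIMSEQ_const_iff)
  then have "inner (p - q) (p - q) = 0"
    using q by (simp add: inner_diff_right)
  then show ?thesis
    using q(1) by simp
qed

lemma closed_op_adjoint: "closed (op_adjoint A)"
proof -
  have "op_adjoint A = (\<Inter>p\<in>A. {q. inner (snd p) (fst q) = inner (fst p) (snd q)})"
    unfolding op_adjoint_def by fastforce
  then show ?thesis
    by (auto intro!: closed_INT closed_Collect_eq continuous_intros)
qed

lemma inner_closure_op_adjoint:
  assumes "(x, w) \<in> closure A" "(y, a) \<in> op_adjoint A"
  shows "inner w y = inner x a"
proof -
  have "A \<subseteq> {p. inner (snd p) y = inner (fst p) a}"
    using assms(2) unfolding op_adjoint_def by auto
  then have "closure A \<subseteq> {p. inner (snd p) y = inner (fst p) a}"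
    by (intro closure_minimal closed_Collect_eq continuous_intros)
  then show ?thesis
    using assms(1) by auto
qed

lemma bound_extends_from_dense:
  fixes D :: "'b::real_inner set"
  assumes "closure D = UNIV" "\<And>x. x \<in> D \<Longrightarrow> \<bar>inner x z\<bar> \<le> M * norm x"
  shows "\<bar>inner v z\<bar> \<le> M * norm v"
proof -
  have "closure D \<subseteq> {x. \<bar>inner x z\<bar> \<le> M * norm x}"
    using assms(2) by (intro closure_minimal closed_Collect_le continuous_intros) auto
  then show ?thesis
    using assms(1) by auto
qed

lemma weak_tendsto_zero_if_bounded_dense:
  fixes z :: "nat \<Rightarrow> 'b::real_inner"
  assumes "closure D = UNIV" "\<And>n v. \<bar>inner v (z n)\<bar> \<le> M * norm v"
    and "\<And>x. x \<in> D \<Longrightarrow> (\<lambda>n. inner x (z n)) \<longlonglongrightarrow> 0"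
  shows "(\<lambda>n. inner v (z n)) \<longlonglongrightarrow> 0"
proof (rule LIMSEQ_I)
  fix r :: real assume "0 < r"
  define M' where "M' = \<bar>M\<bar> + 1"
  have "M' > 0"
    unfolding M'_def by simp
  have "r / (2 * M') > 0"
    using \<open>0 < r\<close> \<open>M' > 0\<close> by simp
  then obtain x where x: "x \<in> D" "dist x v < r / (2 * M')"
    using assms(1) by (metis UNIV_I closure_approachable)
  obtain N where N: "\<And>n. n \<ge> N \<Longrightarrow> \<bar>inner x (z n)\<bar> < r / 2"
    using LIMSEQ_D[OF assms(3)[OF x(1)], of "r/2"] \<open>0 < r\<close> by auto
  have "\<bar>inner v (z n)\<bar> < r" if "n \<ge> N" for n
  proof -
    have "\<bar>inner (v - x) (z n)\<bar> \<le> M' * norm (v - x)"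
      using assms(2)[of "v - x" n] unfolding M'_def
      by (smt (verit) mult_right_mono norm_ge_zero)
    also have "\<dots> < M' * (r / (2 * M'))"
      using x(2) \<open>M' > 0\<close> by (intro mult_strict_left_mono) (simp_all add: dist_commute dist_norm)
    also have "\<dots> = r / 2"
      using \<open>M' > 0\<close> by simp
    finally show ?thesis
      using N[OF that] unfolding inner_diff_left by linarith
  qed
  then show "\<exists>N. \<forall>n\<ge>N. norm (inner v (z n) - 0) < r"
    by auto
qed

lemma mem_ad_graph_iff:
  "(x, b) \<in> ad (graph_of L) B \<longleftrightarrow> (\<exists>s v. (x, s) \<in> B \<and> (L x, v) \<in> B \<and> b = L s - v)"
  unfolding ad_def op_diff_def op_comp_def graph_of_def by auto

lemma subspace_ad_graph:
  assumes "subspace B" "linear L"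
  shows "subspace (ad (graph_of L) B)"
  unfolding subspace_def
proof (intro conjI ballI allI)
  show "0 \<in> ad (graph_of L) B"
    using assms subspace_0 linear_0 by (fastforce simp: mem_ad_graph_iff zero_prod_def)
next
  fix p q assume "p \<in> ad (graph_of L) B" "q \<in> ad (graph_of L) B"
  moreover obtain x b x' b' where pq: "p = (x, b)" "q = (x', b')"
    by fastforce
  ultimately obtain s v s' v' where
    "(x, s) \<in> B" "(L x, v) \<in> B" "b = L s - v" "(x', s') \<in> B" "(L x', v') \<in> B" "b' = L s' - v'"
    by (auto simp: mem_ad_graph_iff)
  moreover have "(x, s) + (x', s') \<in> B" "(L x, v) + (L x', v') \<in> B"
    using calculation subspace_add[OF assms(1)] by blast+
  ultimately have "(x + x', b + b') \<in> ad (graph_of L) B"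
    unfolding mem_ad_graph_iff by (intro exI[of _ "s + s'"] exI[of _ "v + v'"]) (simp add: linear_add[OF assms(2)])
  then show "p + q \<in> ad (graph_of L) B"
    using pq by simp
next
  fix c :: real and p assume "p \<in> ad (graph_of L) B"
  moreover obtain x b where p: "p = (x, b)"
    by fastforce
  ultimately obtain s v where "(x, s) \<in> B" "(L x, v) \<in> B" "b = L s - v"
    by (auto simp: mem_ad_graph_iff)
  moreover have "c *\<^sub>R (x, s) \<in> B" "c *\<^sub>R (L x, v) \<in> B"
    using calculation subspace_scale[OF assms(1)] by blast+
  ultimately have "(c *\<^sub>R x, c *\<^sub>R b) \<in> ad (graph_of L) B"
    unfolding mem_ad_graph_iff
    by (intro exI[of _ "c *\<^sub>R s"] exI[of _ "c *\<^sub>R v"]) (simp add: linear_scale[OF assms(2)] scaleR_diff_right)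
  then show "c *\<^sub>R p \<in> ad (graph_of L) B"
    using p by simp
qed

lemma norm_le_op_norm:
  fixes S :: "('b::real_normed_vector) linop"
  assumes "subspace S" "op_bounded S" "(x, y) \<in> S"
  shows "norm y \<le> op_norm S * norm x"
proof -
  obtain c where c: "c \<ge> 0" "\<forall>(x, y) \<in> S. norm y \<le> c * norm x"
    using assms(2) unfolding op_bounded_def by blast
  show ?thesis
  proof (cases "x = 0")
    case True
    then show ?thesis
      using c assms(3) by fastforce
  next
    case False
    define r where "r = 1 / norm x"
    have "(r *\<^sub>R x, r *\<^sub>R y) \<in> S"
      using subspace_scale[OF assms(1,3), of r] by simp
    moreover have "norm (r *\<^sub>R x) = 1"
      using False r_def by simp
    moreover have "bdd_above {norm y |x y. (x, y) \<in> S \<and> norm x \<le> 1}"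
      using c by (intro bdd_aboveI[of _ c]) (force intro: order_trans mult_left_le)
    ultimately have "norm (r *\<^sub>R y) \<le> op_norm S"
      unfolding op_norm_def by (intro cSup_upper) fastforce+
    then show ?thesis
      using False r_def by (simp add: divide_le_eq mult.commute)
  qed
qed

lemma densely_defined_op_closure:
  assumes "densely_defined A"
  shows "densely_defined (op_closure A)"
proof -
  have "op_dom A \<subseteq> op_dom (closure A)"
    unfolding op_dom_def using closure_subset by blast
  then show ?thesis
    using assms closure_mono unfolding densely_defined_def op_closure_def by blast
qed

text \<open>Below, \<open>a'\<close> and \<open>y'\<close> play the roles of \<open>T\<^sup>* a\<close> and \<open>T\<^sup>* y\<close>, and \<open>w - a'\<close> is the defect
  of the approximant \<open>(T\<^sup>* y, w)\<close> of \<open>(y, a)\<close>.\<close>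

lemma inner_adjoint_defect_eq:
  assumes "(y, a) \<in> op_adjoint A" "(y', w) \<in> op_adjoint A"
    and "\<And>x. inner (T x) y = inner x y'" "\<And>x. inner (T x) a = inner x a'"
    and "(x, b) \<in> ad (graph_of T) (closure A)"
  shows "inner x (w - a') = inner b y"
proof -
  obtain s v where sv: "(x, s) \<in> closure A" "(T x, v) \<in> closure A" "b = T s - v"
    using assms(5) mem_ad_graph_iff by blast
  have "inner x w = inner (T s) y"
    using inner_closure_op_adjoint[OF sv(1) assms(2)] assms(3) by simp
  moreover have "inner x a' = inner v y"
    using inner_closure_op_adjoint[OF sv(2) assms(1)] assms(4) by simp
  ultimately show ?thesis
    using sv(3) by (simp add: inner_diff_left inner_diff_right)
qed

lemma adjoint_defect_bound:
  assumes "(y, a) \<in> op_adjoint A" "(y', w) \<in> op_adjoint A"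
    and "\<And>x. inner (T x) y = inner x y'" "\<And>x. inner (T x) a = inner x a'"
    and "subspace A" "linear T"
    and "densely_defined (ad (graph_of T) (op_closure A))"
    and "op_bounded (ad (graph_of T) (op_closure A))"
  shows "\<bar>inner v (w - a')\<bar> \<le> op_norm (ad (graph_of T) (op_closure A)) * norm y * norm v"
proof (rule bound_extends_from_dense)
  let ?D = "ad (graph_of T) (closure A)"
  show "closure (op_dom ?D) = UNIV"
    using assms(7) unfolding densely_defined_def op_closure_def .
  fix x assume "x \<in> op_dom ?D"
  then obtain b where xb: "(x, b) \<in> ?D"
    unfolding op_dom_def by blast
  have "norm b \<le> op_norm ?D * norm x"
    using norm_le_op_norm[OF subspace_ad_graph[OF subspace_closure[OF assms(5)] assms(6)]] assms(8) xb
    unfolding op_closure_def by blast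
  then have "\<bar>inner b y\<bar> \<le> op_norm ?D * norm x * norm y"
    using Cauchy_Schwarz_ineq2[of b y] by (meson mult_right_mono norm_ge_zero order_trans)
  then show "\<bar>inner x (w - a')\<bar> \<le> op_norm (ad (graph_of T) (op_closure A)) * norm y * norm x"
    using inner_adjoint_defect_eq[OF assms(1-4) xb] unfolding op_closure_def
    by (simp add: algebra_simps)
qed

lemma adjoint_defect_tendsto_zero_on_domain:
  assumes "wot_tendsto_id T" "\<And>n x y. inner (T n x) y = inner x (S n y)"
    and "(y, a) \<in> op_adjoint A" "\<And>n. (S n y, w n) \<in> op_adjoint A"
    and "x \<in> op_dom (closure A)"
  shows "(\<lambda>n. inner x (w n - S n a)) \<longlonglongrightarrow> 0"
proof -
  obtain e where e: "(x, e) \<in> closure A"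
    using assms(5) unfolding op_dom_def by blast
  have "(\<lambda>n. inner (T n e) y - inner (T n x) a) \<longlonglongrightarrow> inner e y - inner x a"
    using assms(1) unfolding wot_tendsto_id_def by (intro tendsto_diff) auto
  moreover have "inner x (w n - S n a) = inner (T n e) y - inner (T n x) a" for n
    using inner_closure_op_adjoint[OF e assms(4)] assms(2) by (simp add: inner_diff_right)
  moreover have "inner e y = inner x a"
    by (rule inner_closure_op_adjoint[OF e assms(3)])
  ultimately show ?thesis
    by simp
qed

lemma adjoint_defect_weak_tendsto_zero:
  fixes T S :: "nat \<Rightarrow> 'a::real_inner \<Rightarrow> 'a"
  assumes "subspace A" "densely_defined A" "\<And>n. linear (T n)" "wot_tendsto_id T"
    and "\<And>n x y. inner (T n x) y = inner x (S n y)"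
    and "\<And>n. densely_defined (ad (graph_of (T n)) (op_closure A))
               \<and> op_bounded (ad (graph_of (T n)) (op_closure A))"
    and "\<And>n. op_norm (ad (graph_of (T n)) (op_closure A)) \<le> C"
    and "(y, a) \<in> op_adjoint A" "\<And>n. (S n y, w n) \<in> op_adjoint A"
  shows "(\<lambda>n. inner v (w n - S n a)) \<longlonglongrightarrow> 0"
proof (rule weak_tendsto_zero_if_bounded_dense)
  show "closure (op_dom (closure A)) = UNIV"
    using densely_defined_op_closure[OF assms(2)] unfolding densely_defined_def op_closure_def .
  show "(\<lambda>n. inner x (w n - S n a)) \<longlonglongrightarrow> 0" if "x \<in> op_dom (closure A)" for x
    by (rule adjoint_defect_tendsto_zero_on_domain[OF assms(4,5,8,9) that])
  fix n v
  have "\<bar>inner v (w n - S n a)\<bar> \<le> op_norm (ad (graph_of (T n)) (op_closure A)) * (norm y * norm v)"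
    using adjoint_defect_bound[OF assms(8,9,5,5,1,3)] assms(6) by (simp add: mult.assoc)
  also have "\<dots> \<le> C * (norm y * norm v)"
    by (intro mult_right_mono assms(7)) simp
  finally show "\<bar>inner v (w n - S n a)\<bar> \<le> (C * norm y) * norm v"
    by (simp add: mult.assoc)
qed

lemma weak_tendsto_adjoint_approximants:
  assumes "wot_tendsto_id T" "\<And>n x y. inner (T n x) y = inner x (S n y)"
    and "\<And>v. (\<lambda>n. inner v (w n - S n a)) \<longlonglongrightarrow> 0"
  shows "(\<lambda>n. inner p (S n y, w n)) \<longlonglongrightarrow> inner p (y, a)"
proof (cases p)
  case (Pair u v)
  have "inner p (S n y, w n) = inner (T n u) y + inner (T n v) a + inner v (w n - S n a)" for n
    using Pair by (simp add: assms(2) inner_diff_right)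
  moreover have "(\<lambda>n. inner (T n u) y + inner (T n v) a + inner v (w n - S n a))
      \<longlonglongrightarrow> inner u y + inner v a + 0"
    using assms(1,3) unfolding wot_tendsto_id_def by (intro tendsto_add) auto
  ultimately show ?thesis
    using Pair by simp
qed

theorem theorem3:
  fixes A A0 :: "('a::{real_inner, complete_space}) linop"
    and T :: "nat \<Rightarrow> 'a \<Rightarrow> 'a"
  assumes "is_op A" and "closable A" and "densely_defined A"
    and "is_op A0" and "A0 \<subseteq> op_adjoint A"
    and "\<And>n. bounded_linear (T n)"
    and "wot_tendsto_id T"
    and f1: "\<And>n. densely_defined (ad (graph_of (T n)) (op_closure A))
               \<and> op_bounded (ad (graph_of (T n)) (op_closure A))"
    and f2: "\<And>n y z. y \<in> op_dom (op_adjoint A) \<Longrightarrow> (y, z) \<in> op_adjoint (graph_of (T n))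
               \<Longrightarrow> z \<in> op_dom (op_closure A0)"
    and "\<exists>C. \<forall>n. op_norm (ad (graph_of (T n)) (op_closure A)) \<le> C"
  shows "op_closure A0 = op_adjoint A"
proof -
  obtain C where C: "\<And>n. op_norm (ad (graph_of (T n)) (op_closure A)) \<le> C"
    using assms(10) by blast
  obtain S where S: "\<And>n x y. inner (T n x) y = inner x (S n y)"
  proof -
    have "\<forall>n. \<exists>S'. \<forall>x y. inner (T n x) y = inner x (S' y)"
      using bounded_linear_has_adjoint[OF assms(6)] by blast
    then show ?thesis
      using that unfolding choice_iff by blast
  qed
  have closure_A0: "closure A0 \<subseteq> op_adjoint A"
    by (rule closure_minimal[OF assms(5) closed_op_adjoint])
  have "(y, a) \<in> closure A0" if ya: "(y, a) \<in> op_adjoint A" for y a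
  proof -
    have "y \<in> op_dom (op_adjoint A)" "\<And>n. (y, S n y) \<in> op_adjoint (graph_of (T n))"
      using ya unfolding op_dom_def op_adjoint_def graph_of_def by (auto simp: S)
    then have "\<forall>n. \<exists>z. (S n y, z) \<in> closure A0"
      using f2 unfolding op_dom_def op_closure_def by blast
    then obtain w where w: "\<And>n. (S n y, w n) \<in> closure A0"
      unfolding choice_iff by blast
    have "(S n y, w n) \<in> op_adjoint A" for n
      using w closure_A0 by blast
    moreover have "subspace A" "subspace A0"
      using assms(1,4) unfolding is_op_def by blast+
    ultimately have "(\<lambda>n. inner v (w n - S n a)) \<longlonglongrightarrow> 0" for v
      using adjoint_defect_weak_tendsto_zero[OF _ assms(3) bounded_linear.linear[OF assms(6)] assms(7) S f1 C ya]
      by blast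
    from weak_tendsto_adjoint_approximants[OF assms(7) S this]
    show ?thesis
      by (rule mem_closed_subspace_if_weak_limit[OF subspace_closure[OF \<open>subspace A0\<close>] closed_closure w])
  qed
  then show ?thesis
    using closure_A0 unfolding op_closure_def by auto
qed

end
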